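(* Let $\{\mathcal H,\gamma,\ell,\ell^{(2)}\}$ be null metric hypersurface data, $\theta$ any one-form and $f$ any smooth function on $\mathcal H$. Let $X$ be the vector field $X^b=P^{bc}\theta_c$. Then $$n^b(\mathcal L_X\gamma)_{ab}=(\mathcal L_n\theta)_a-\mathcal L_n\big(\theta(n)\big)\ell_a-2\big(\theta(n)s_a+P^{bc}U_{ab}\theta_c\big),\qquad n^b(\mathcal L_{fn}\gamma)_{ab}=0.$$
   Context: Metric hypersurface data: $\mathcal H$ smooth $\mathfrak n$-manifold with symmetric $(0,2)$-tensor $\gamma$, one-form $\ell$, function $\ell^{(2)}$ such that $\mathcal A((W,a),(V,b))=\gamma(W,V)+a\ell(V)+b\ell(W)+ab\ell^{(2)}$ is non-degenerate on each $T_p\mathcal H\times\mathbb R$. $P$ (symmetric $(2,0)$), $n$, $n^{(2)}$ defined by $\gamma_{ab}n^b+n^{(2)}\ell_a=0$, $\ell_an^a+n^{(2)}\ell^{(2)}=1$, $P^{ab}\ell_b+\ell^{(2)}n^a=0$, $P^{ac}\gamma_{cb}+\ell_bn^a=\delta^a_b$; null means $n^{(2)}=0$. $U_{ab}=\frac12(\mathcal L_n\gamma)_{ab}$ (null case), $F=\frac12d\ell$, $s_a=n^bF_{ba}$, $\theta(n)=\theta_an^a$. *)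

theory Defs
  imports "HOL-Analysis.Analysis"
begin

text \<open>The hypersurface is modelled by an open coordinate
domain H in real^'n (the dimension is CARD('n)). Tensor fields are given by their
component functions: a function is real^'n => real, a vector field or one-form is
real^'n => 'n => real, a (0,2) or (2,0) tensor is real^'n => 'n => 'n => real.\<close>

definition pd :: "'n::finite \<Rightarrow> (real^'n \<Rightarrow> real) \<Rightarrow> real^'n \<Rightarrow> real" where
  "pd i f x = frechet_derivative f (at x) (axis i 1)"

fun Ck :: "nat \<Rightarrow> (real^'n::finite) set \<Rightarrow> (real^'n \<Rightarrow> real) \<Rightarrow> bool" where
  "Ck 0 S f = continuous_on S f"
| "Ck (Suc k) S f = ((\<forall>x\<in>S. f differentiable (at x)) \<and> (\<forall>i. Ck k S (pd i f)))"

definition smooth_fun :: "(real^'n::finite) set \<Rightarrow> (real^'n \<Rightarrow> real) \<Rightarrow> bool" where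
  "smooth_fun S f \<longleftrightarrow> (\<forall>k. Ck k S f)"

definition smooth_field1 :: "(real^'n::finite) set \<Rightarrow> (real^'n \<Rightarrow> 'n \<Rightarrow> real) \<Rightarrow> bool" where
  "smooth_field1 S V \<longleftrightarrow> (\<forall>a. smooth_fun S (\<lambda>x. V x a))"

definition smooth_field2 :: "(real^'n::finite) set \<Rightarrow> (real^'n \<Rightarrow> 'n \<Rightarrow> 'n \<Rightarrow> real) \<Rightarrow> bool" where
  "smooth_field2 S T \<longleftrightarrow> (\<forall>a b. smooth_fun S (\<lambda>x. T x a b))"

definition lie_fun :: "(real^'n::finite \<Rightarrow> 'n \<Rightarrow> real) \<Rightarrow> (real^'n \<Rightarrow> real) \<Rightarrow> real^'n \<Rightarrow> real" where
  "lie_fun V f x = (\<Sum>c\<in>UNIV. V x c * pd c f x)"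

definition lie_form :: "(real^'n::finite \<Rightarrow> 'n \<Rightarrow> real) \<Rightarrow> (real^'n \<Rightarrow> 'n \<Rightarrow> real) \<Rightarrow> real^'n \<Rightarrow> 'n \<Rightarrow> real" where
  "lie_form V \<theta> x a = (\<Sum>c\<in>UNIV. V x c * pd c (\<lambda>y. \<theta> y a) x + \<theta> x c * pd a (\<lambda>y. V y c) x)"

definition lie_tensor :: "(real^'n::finite \<Rightarrow> 'n \<Rightarrow> real) \<Rightarrow> (real^'n \<Rightarrow> 'n \<Rightarrow> 'n \<Rightarrow> real)
    \<Rightarrow> real^'n \<Rightarrow> 'n \<Rightarrow> 'n \<Rightarrow> real" where
  "lie_tensor V T x a b = (\<Sum>c\<in>UNIV. V x c * pd c (\<lambda>y. T y a b) x
       + T x c b * pd a (\<lambda>y. V y c) x + T x a c * pd b (\<lambda>y. V y c) x)"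

text \<open>Metric hypersurface data: gamma symmetric, A non-degenerate at each point.\<close>

definition metric_hypersurface_data ::
  "(real^'n::finite) set \<Rightarrow> (real^'n \<Rightarrow> 'n \<Rightarrow> 'n \<Rightarrow> real) \<Rightarrow> (real^'n \<Rightarrow> 'n \<Rightarrow> real) \<Rightarrow> (real^'n \<Rightarrow> real) \<Rightarrow> bool" where
  "metric_hypersurface_data H \<gamma> ell ell2 \<longleftrightarrow>
     open H \<and> smooth_field2 H \<gamma> \<and> smooth_field1 H ell \<and> smooth_fun H ell2 \<and>
     (\<forall>x\<in>H. \<forall>a b. \<gamma> x a b = \<gamma> x b a) \<and>
     (\<forall>x\<in>H. \<forall>(W::'n \<Rightarrow> real) (s::real).
        (\<forall>(V::'n \<Rightarrow> real) (t::real).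
           (\<Sum>a\<in>UNIV. \<Sum>b\<in>UNIV. \<gamma> x a b * W a * V b) + s * (\<Sum>a\<in>UNIV. ell x a * V a)
           + t * (\<Sum>a\<in>UNIV. ell x a * W a) + s * t * ell2 x = 0)
        \<longrightarrow> (W = (\<lambda>_. 0) \<and> s = 0))"

text \<open>The fields P, n, n2 determined by the data (uniquely, by non-degeneracy).\<close>

definition hypersurface_inverse ::
  "(real^'n::finite) set \<Rightarrow> (real^'n \<Rightarrow> 'n \<Rightarrow> 'n \<Rightarrow> real) \<Rightarrow> (real^'n \<Rightarrow> 'n \<Rightarrow> real) \<Rightarrow> (real^'n \<Rightarrow> real)
   \<Rightarrow> (real^'n \<Rightarrow> 'n \<Rightarrow> 'n \<Rightarrow> real) \<Rightarrow> (real^'n \<Rightarrow> 'n \<Rightarrow> real) \<Rightarrow> (real^'n \<Rightarrow> real) \<Rightarrow> bool" where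
  "hypersurface_inverse H \<gamma> ell ell2 P n n2 \<longleftrightarrow>
     (\<forall>x\<in>H.
       (\<forall>a b. P x a b = P x b a) \<and>
       (\<forall>a. (\<Sum>b\<in>UNIV. \<gamma> x a b * n x b) + n2 x * ell x a = 0) \<and>
       (\<Sum>a\<in>UNIV. ell x a * n x a) + n2 x * ell2 x = 1 \<and>
       (\<forall>a. (\<Sum>b\<in>UNIV. P x a b * ell x b) + ell2 x * n x a = 0) \<and>
       (\<forall>a b. (\<Sum>c\<in>UNIV. P x a c * \<gamma> x c b) + ell x b * n x a = (if a = b then 1 else 0)))"

definition U_tensor where
  "U_tensor n \<gamma> x a b = (1/2) * lie_tensor n \<gamma> x a b"

definition F_tensor :: "(real^'n::finite \<Rightarrow> 'n \<Rightarrow> real) \<Rightarrow> real^'n \<Rightarrow> 'n \<Rightarrow> 'n \<Rightarrow> real" where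
  "F_tensor ell x a b = (1/2) * (pd a (\<lambda>y. ell y b) x - pd b (\<lambda>y. ell y a) x)"

definition s_form :: "(real^'n::finite \<Rightarrow> 'n \<Rightarrow> real) \<Rightarrow> (real^'n \<Rightarrow> 'n \<Rightarrow> real) \<Rightarrow> real^'n \<Rightarrow> 'n \<Rightarrow> real" where
  "s_form n ell x a = (\<Sum>b\<in>UNIV. n x b * F_tensor ell x b a)"

end

theory Submission
  imports Defs
begin

(* Because gamma(-, n) = 0, the Leibniz rule for the Lie derivative of the contraction gamma(-, n)
   along X gives n^b (L_X gamma)_ab = gamma_ab [n, X]^b.  For X = f n the bracket [n, f n] = n(f) n
   is again annihilated by gamma.  For X^b = P^bc theta_c apply the Leibniz rule once more, now along n:
   gamma_ab [n, X]^b = L_n(gamma(X))_a - (L_n gamma)_ab X^b, where the relations defining P give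
   gamma(X) = theta - theta(n) ell, and Cartan's formula with ell(n) = 1 gives L_n ell = 2 s. *)

definition lie_vec :: "(real^'n::finite \<Rightarrow> 'n \<Rightarrow> real) \<Rightarrow> (real^'n \<Rightarrow> 'n \<Rightarrow> real) \<Rightarrow> real^'n \<Rightarrow> 'n \<Rightarrow> real" where
  "lie_vec V W x a = (\<Sum>c\<in>UNIV. V x c * pd c (\<lambda>y. W y a) x - W x c * pd c (\<lambda>y. V y a) x)"

lemma pd_eqI: "(f has_derivative f') (at x) \<Longrightarrow> pd i f x = f' (axis i 1)"
  unfolding pd_def by (drule frechet_derivative_at) simp

lemma pd_mult:
  assumes "f differentiable (at x)" "g differentiable (at x)"
  shows "pd i (\<lambda>y. f y * g y) x = f x * pd i g x + pd i f x * g x"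
  using pd_eqI[OF has_derivative_mult[OF assms[unfolded frechet_derivative_works]]]
  by (simp add: pd_def)

lemma pd_diff:
  assumes "f differentiable (at x)" "g differentiable (at x)"
  shows "pd i (\<lambda>y. f y - g y) x = pd i f x - pd i g x"
  using pd_eqI[OF has_derivative_diff[OF assms[unfolded frechet_derivative_works]]]
  by (simp add: pd_def)

lemma pd_sum:
  assumes "\<And>k. f k differentiable (at x)"
  shows "pd i (\<lambda>y. \<Sum>k\<in>(UNIV::'a::finite set). f k y) x = (\<Sum>k\<in>UNIV. pd i (f k) x)"
  using pd_eqI[OF has_derivative_sum[of UNIV, OF assms[unfolded frechet_derivative_works]]]
  by (simp add: pd_def)

lemma pd_cong_open:
  assumes "open S" "x \<in> S" "\<And>y. y \<in> S \<Longrightarrow> f y = g y" "g differentiable (at x)"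
  shows "pd i f x = pd i g x"
proof -
  have "(g has_derivative frechet_derivative g (at x)) (at x)"
    using assms(4) frechet_derivative_works by blast
  then have "(f has_derivative frechet_derivative g (at x)) (at x)"
    by (rule has_derivative_transform_within_open[OF _ assms(1,2)]) (simp add: assms(3))
  from pd_eqI[OF this] show ?thesis by (simp add: pd_def)
qed

lemma pd_const_open:
  assumes "open S" "x \<in> S" "\<And>y. y \<in> S \<Longrightarrow> f y = k"
  shows "pd i f x = 0"
proof -
  have "(f has_derivative (\<lambda>h. 0)) (at x)"
    by (rule has_derivative_transform_within_open[OF _ assms(1,2)]) (simp_all add: assms(3))
  then show ?thesis by (rule pd_eqI)
qed

lemma lie_form_contraction:
  assumes "\<And>a b. (\<lambda>y. T y a b) differentiable (at x)" "\<And>a. (\<lambda>y. W y a) differentiable (at x)"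
  shows "lie_form V (\<lambda>y a. \<Sum>b\<in>UNIV. T y a b * W y b) x a
       = (\<Sum>b\<in>UNIV. lie_tensor V T x a b * W x b) + (\<Sum>b\<in>UNIV. T x a b * lie_vec V W x b)"
proof -
  have "lie_form V (\<lambda>y a. \<Sum>b\<in>UNIV. T y a b * W y b) x a
      = (\<Sum>c\<in>UNIV. \<Sum>b\<in>UNIV. V x c * pd c (\<lambda>y. T y a b) x * W x b
           + V x c * T x a b * pd c (\<lambda>y. W y b) x + T x c b * W x b * pd a (\<lambda>y. V y c) x)"
    unfolding lie_form_def
    by (simp add: assms pd_sum pd_mult sum.distrib sum_distrib_left sum_distrib_right algebra_simps)
  also have "\<dots> = (\<Sum>b\<in>UNIV. \<Sum>c\<in>UNIV. V x c * pd c (\<lambda>y. T y a b) x * W x b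
           + V x c * T x a b * pd c (\<lambda>y. W y b) x + T x c b * W x b * pd a (\<lambda>y. V y c) x)"
    by (rule sum.swap)
  also have "\<dots> = (\<Sum>b\<in>UNIV. lie_tensor V T x a b * W x b) + (\<Sum>b\<in>UNIV. T x a b * lie_vec V W x b)"
  proof -
    have "(\<Sum>b\<in>UNIV. \<Sum>c\<in>UNIV. T x a c * pd b (\<lambda>y. V y c) x * W x b)
        = (\<Sum>b\<in>UNIV. \<Sum>c\<in>UNIV. T x a b * W x c * pd c (\<lambda>y. V y b) x)"
      by (subst sum.swap) (simp add: mult_ac)
    then show ?thesis
      unfolding lie_tensor_def lie_vec_def
      by (simp add: sum.distrib sum_subtractf sum_distrib_left sum_distrib_right algebra_simps)
  qed
  finally show ?thesis .
qed

lemma lie_vec_antisym: "lie_vec W V x a = - lie_vec V W x a"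
  unfolding lie_vec_def by (simp add: sum_subtractf)

lemma lie_vec_scaled_self:
  assumes "f differentiable (at x)" "\<And>a. (\<lambda>y. V y a) differentiable (at x)"
  shows "lie_vec V (\<lambda>y a. f y * V y a) x a = lie_fun V f x * V x a"
  unfolding lie_vec_def lie_fun_def
  by (simp add: assms pd_mult sum_distrib_left sum_distrib_right algebra_simps)

lemma lie_form_scaled:
  assumes "f differentiable (at x)" "\<And>a. (\<lambda>y. \<omega> y a) differentiable (at x)"
  shows "lie_form V (\<lambda>y a. f y * \<omega> y a) x a = lie_fun V f x * \<omega> x a + f x * lie_form V \<omega> x a"
  unfolding lie_form_def lie_fun_def
  by (simp add: assms pd_mult sum.distrib sum_distrib_left sum_distrib_right algebra_simps)

lemma lie_form_diff:
  assumes "\<And>a. (\<lambda>y. \<omega> y a) differentiable (at x)" "\<And>a. (\<lambda>y. \<eta> y a) differentiable (at x)"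
  shows "lie_form V (\<lambda>y a. \<omega> y a - \<eta> y a) x a = lie_form V \<omega> x a - lie_form V \<eta> x a"
  unfolding lie_form_def
  by (simp add: assms pd_diff sum.distrib sum_subtractf algebra_simps)

lemma lie_form_cong_open:
  assumes "open S" "x \<in> S" "\<And>y a. y \<in> S \<Longrightarrow> \<omega> y a = \<eta> y a"
    and "\<And>a. (\<lambda>y. \<eta> y a) differentiable (at x)"
  shows "lie_form V \<omega> x a = lie_form V \<eta> x a"
proof -
  have "pd c (\<lambda>y. \<omega> y b) x = pd c (\<lambda>y. \<eta> y b) x" for b c
    using assms by (intro pd_cong_open[OF assms(1,2)]) auto
  then show ?thesis
    unfolding lie_form_def using assms(2,3) by simp
qed

lemma lie_form_Cartan:
  assumes "\<And>a. (\<lambda>y. \<omega> y a) differentiable (at x)" "\<And>a. (\<lambda>y. V y a) differentiable (at x)"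
  shows "lie_form V \<omega> x a = 2 * s_form V \<omega> x a + pd a (\<lambda>y. \<Sum>c\<in>UNIV. \<omega> y c * V y c) x"
  unfolding lie_form_def s_form_def F_tensor_def
  by (simp add: assms pd_sum pd_mult sum.distrib sum_subtractf sum_distrib_left algebra_simps)

lemma lie_tensor_contraction_vanishing:
  assumes "open S" "x \<in> S" "\<And>y a. y \<in> S \<Longrightarrow> (\<Sum>b\<in>UNIV. T y a b * W y b) = 0"
    and "\<And>a b. (\<lambda>y. T y a b) differentiable (at x)" "\<And>a. (\<lambda>y. W y a) differentiable (at x)"
  shows "(\<Sum>b\<in>UNIV. W x b * lie_tensor V T x a b) = (\<Sum>b\<in>UNIV. T x a b * lie_vec W V x b)"
proof -
  have "lie_form V (\<lambda>y a. \<Sum>b\<in>UNIV. T y a b * W y b) x a = 0"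
    unfolding lie_form_def using pd_const_open[OF assms(1,2,3)] assms(2,3) by simp
  then show ?thesis
    unfolding lie_form_contraction[OF assms(4,5)] lie_vec_antisym[of W]
    by (simp add: sum_negf mult.commute add_eq_0_iff)
qed

lemma contraction_with_inverse:
  fixes g P :: "'n::finite \<Rightarrow> 'n \<Rightarrow> real"
  assumes "\<And>a b. g a b = g b a" "\<And>a b. P a b = P b a"
    and "\<And>a b. (\<Sum>c\<in>UNIV. P a c * g c b) + l b * n a = (if a = b then 1 else 0)"
  shows "(\<Sum>b\<in>UNIV. g a b * (\<Sum>c\<in>UNIV. P b c * t c)) = t a - (\<Sum>c\<in>UNIV. t c * n c) * l a"
proof -
  have "(\<Sum>b\<in>UNIV. g a b * (\<Sum>c\<in>UNIV. P b c * t c)) = (\<Sum>b\<in>UNIV. \<Sum>c\<in>UNIV. t c * (P c b * g b a))"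
    by (simp add: sum_distrib_left assms(1,2) mult_ac)
  also have "\<dots> = (\<Sum>c\<in>UNIV. t c * (\<Sum>b\<in>UNIV. P c b * g b a))"
    by (subst sum.swap) (simp add: sum_distrib_left)
  also have "\<dots> = (\<Sum>c\<in>UNIV. t c * ((if c = a then 1 else 0) - l a * n c))"
    using assms(3) by (simp add: eq_diff_eq[symmetric])
  also have "\<dots> = t a - (\<Sum>c\<in>UNIV. t c * n c) * l a"
    by (simp add: right_diff_distrib sum_subtractf sum_distrib_left mult_ac flip: of_bool_def)
  finally show ?thesis .
qed

lemma smooth_fun_differentiable: "smooth_fun S f \<Longrightarrow> x \<in> S \<Longrightarrow> f differentiable (at x)"
  unfolding smooth_fun_def by (metis Ck.simps(2))

lemma smooth_field1_differentiable:
  "smooth_field1 S V \<Longrightarrow> x \<in> S \<Longrightarrow> (\<lambda>y. V y a) differentiable (at x)"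
  unfolding smooth_field1_def by (blast intro: smooth_fun_differentiable)

lemma smooth_field2_differentiable:
  "smooth_field2 S T \<Longrightarrow> x \<in> S \<Longrightarrow> (\<lambda>y. T y a b) differentiable (at x)"
  unfolding smooth_field2_def by (blast intro: smooth_fun_differentiable)

lemma lie_tensor_raised_form_null:
  assumes S: "open S" "x \<in> S"
    and sym: "\<And>y a b. y \<in> S \<Longrightarrow> \<gamma> y a b = \<gamma> y b a" "\<And>y a b. y \<in> S \<Longrightarrow> P y a b = P y b a"
    and inverse: "\<And>y a b. y \<in> S \<Longrightarrow>
      (\<Sum>c\<in>UNIV. P y a c * \<gamma> y c b) + ell y b * n y a = (if a = b then 1 else 0)"
    and null: "\<And>y a. y \<in> S \<Longrightarrow> (\<Sum>b\<in>UNIV. \<gamma> y a b * n y b) = 0"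
    and normalised: "\<And>y. y \<in> S \<Longrightarrow> (\<Sum>c\<in>UNIV. ell y c * n y c) = 1"
    and diff: "\<And>a b. (\<lambda>y. \<gamma> y a b) differentiable (at x)" "\<And>a b. (\<lambda>y. P y a b) differentiable (at x)"
      "\<And>a. (\<lambda>y. n y a) differentiable (at x)" "\<And>a. (\<lambda>y. ell y a) differentiable (at x)"
      "\<And>a. (\<lambda>y. \<theta> y a) differentiable (at x)"
  shows "(\<Sum>b\<in>UNIV. n x b * lie_tensor (\<lambda>y b. \<Sum>c\<in>UNIV. P y b c * \<theta> y c) \<gamma> x a b)
       = lie_form n \<theta> x a
         - lie_fun n (\<lambda>y. \<Sum>c\<in>UNIV. \<theta> y c * n y c) x * ell x a
         - 2 * ((\<Sum>c\<in>UNIV. \<theta> x c * n x c) * s_form n ell x a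
                + (\<Sum>b\<in>UNIV. \<Sum>c\<in>UNIV. P x b c * U_tensor n \<gamma> x a b * \<theta> x c))"
proof -
  define X where "X = (\<lambda>y b. \<Sum>c\<in>UNIV. P y b c * \<theta> y c)"
  define tn where "tn = (\<lambda>y. \<Sum>c\<in>UNIV. \<theta> y c * n y c)"
  have dX: "(\<lambda>y. X y b) differentiable (at x)" for b
    unfolding X_def by (simp add: diff)
  have dtn: "tn differentiable (at x)"
    unfolding tn_def by (simp add: diff)
  have lowered: "(\<Sum>b\<in>UNIV. \<gamma> y a b * X y b) = \<theta> y a - tn y * ell y a" if "y \<in> S" for y a
    unfolding X_def tn_def by (intro contraction_with_inverse sym inverse that)
  have lie_ell: "lie_form n ell x a = 2 * s_form n ell x a"
    using lie_form_Cartan[OF diff(4,3)] pd_const_open[OF S normalised] by simp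
  have bracket: "(\<Sum>b\<in>UNIV. n x b * lie_tensor X \<gamma> x a b) = (\<Sum>b\<in>UNIV. \<gamma> x a b * lie_vec n X x b)"
    using lie_tensor_contraction_vanishing[OF S null diff(1,3)] .
  have leibniz: "(\<Sum>b\<in>UNIV. \<gamma> x a b * lie_vec n X x b)
      = lie_form n (\<lambda>y a. \<Sum>b\<in>UNIV. \<gamma> y a b * X y b) x a - (\<Sum>b\<in>UNIV. lie_tensor n \<gamma> x a b * X x b)"
    using lie_form_contraction[OF diff(1) dX] by simp
  have "lie_form n (\<lambda>y a. \<Sum>b\<in>UNIV. \<gamma> y a b * X y b) x a
      = lie_form n (\<lambda>y a. \<theta> y a - tn y * ell y a) x a"
    using S lowered by (intro lie_form_cong_open) (auto simp: diff dtn)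
  also have "\<dots> = lie_form n \<theta> x a - lie_fun n tn x * ell x a - 2 * tn x * s_form n ell x a"
    by (simp add: lie_form_diff lie_form_scaled lie_ell diff dtn)
  finally have lie_lowered: "lie_form n (\<lambda>y a. \<Sum>b\<in>UNIV. \<gamma> y a b * X y b) x a
      = lie_form n \<theta> x a - lie_fun n tn x * ell x a - 2 * tn x * s_form n ell x a" .
  have lie_\<gamma>_X: "(\<Sum>b\<in>UNIV. lie_tensor n \<gamma> x a b * X x b)
      = 2 * (\<Sum>b\<in>UNIV. \<Sum>c\<in>UNIV. P x b c * U_tensor n \<gamma> x a b * \<theta> x c)"
    unfolding X_def U_tensor_def sum_distrib_left by (intro sum.cong refl) simp
  have "(\<Sum>b\<in>UNIV. n x b * lie_tensor X \<gamma> x a b)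
      = lie_form n \<theta> x a - lie_fun n tn x * ell x a
        - 2 * (tn x * s_form n ell x a + (\<Sum>b\<in>UNIV. \<Sum>c\<in>UNIV. P x b c * U_tensor n \<gamma> x a b * \<theta> x c))"
    unfolding bracket leibniz lie_lowered lie_\<gamma>_X by (simp add: algebra_simps)
  then show ?thesis
    unfolding X_def tn_def .
qed

lemma lie_tensor_scaled_normal_null:
  assumes S: "open S" "x \<in> S"
    and null: "\<And>y a. y \<in> S \<Longrightarrow> (\<Sum>b\<in>UNIV. \<gamma> y a b * n y b) = 0"
    and diff: "\<And>a b. (\<lambda>y. \<gamma> y a b) differentiable (at x)" "\<And>a. (\<lambda>y. n y a) differentiable (at x)"
      "f differentiable (at x)"
  shows "(\<Sum>b\<in>UNIV. n x b * lie_tensor (\<lambda>y c. f y * n y c) \<gamma> x a b) = 0"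
proof -
  have "(\<Sum>b\<in>UNIV. n x b * lie_tensor (\<lambda>y c. f y * n y c) \<gamma> x a b)
      = (\<Sum>b\<in>UNIV. \<gamma> x a b * lie_vec n (\<lambda>y c. f y * n y c) x b)"
    using lie_tensor_contraction_vanishing[OF S null diff(1,2)] .
  also have "\<dots> = lie_fun n f x * (\<Sum>b\<in>UNIV. \<gamma> x a b * n x b)"
    by (simp add: lie_vec_scaled_self diff sum_distrib_left mult_ac)
  finally show ?thesis
    using null[OF S(2)] by simp
qed

theorem lemmaC3:
  fixes H :: "(real^'n::finite) set"
    and \<gamma> P :: "real^'n \<Rightarrow> 'n \<Rightarrow> 'n \<Rightarrow> real"
    and ell n \<theta> :: "real^'n \<Rightarrow> 'n \<Rightarrow> real"
    and ell2 n2 f :: "real^'n \<Rightarrow> real"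
  assumes data: "metric_hypersurface_data H \<gamma> ell ell2"
    and inv: "hypersurface_inverse H \<gamma> ell ell2 P n n2"
    and smoothP: "smooth_field2 H P" and smoothn: "smooth_field1 H n" and smoothn2: "smooth_fun H n2"
    and null: "\<forall>x\<in>H. n2 x = 0"
    and smooth\<theta>: "smooth_field1 H \<theta>" and smoothf: "smooth_fun H f"
  shows "(\<forall>x\<in>H. \<forall>a.
           (\<Sum>b\<in>UNIV. n x b * lie_tensor (\<lambda>y b. \<Sum>c\<in>UNIV. P y b c * \<theta> y c) \<gamma> x a b)
         = lie_form n \<theta> x a
           - lie_fun n (\<lambda>y. \<Sum>c\<in>UNIV. \<theta> y c * n y c) x * ell x a
           - 2 * ((\<Sum>c\<in>UNIV. \<theta> x c * n x c) * s_form n ell x a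
                  + (\<Sum>b\<in>UNIV. \<Sum>c\<in>UNIV. P x b c * U_tensor n \<gamma> x a b * \<theta> x c)))
     \<and> (\<forall>x\<in>H. \<forall>a. (\<Sum>b\<in>UNIV. n x b * lie_tensor (\<lambda>y c. f y * n y c) \<gamma> x a b) = 0)"
proof -
  from data have H: "open H" and \<gamma>_sym: "\<And>y a b. y \<in> H \<Longrightarrow> \<gamma> y a b = \<gamma> y b a"
    and smooth\<gamma>: "smooth_field2 H \<gamma>" and smooth_ell: "smooth_field1 H ell"
    unfolding metric_hypersurface_data_def by auto
  from inv null have P_sym: "\<And>y a b. y \<in> H \<Longrightarrow> P y a b = P y b a"
    and inverse: "\<And>y a b. y \<in> H \<Longrightarrow>
      (\<Sum>c\<in>UNIV. P y a c * \<gamma> y c b) + ell y b * n y a = (if a = b then 1 else 0)"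
    and \<gamma>_n: "\<And>y a. y \<in> H \<Longrightarrow> (\<Sum>b\<in>UNIV. \<gamma> y a b * n y b) = 0"
    and ell_n: "\<And>y. y \<in> H \<Longrightarrow> (\<Sum>c\<in>UNIV. ell y c * n y c) = 1"
    unfolding hypersurface_inverse_def by auto
  show ?thesis
    by (intro conjI ballI allI lie_tensor_raised_form_null[OF H _ \<gamma>_sym P_sym inverse \<gamma>_n ell_n]
        lie_tensor_scaled_normal_null[OF H _ \<gamma>_n] smooth_field2_differentiable[OF smooth\<gamma>]
        smooth_field2_differentiable[OF smoothP] smooth_field1_differentiable[OF smoothn]
        smooth_field1_differentiable[OF smooth_ell] smooth_field1_differentiable[OF smooth\<theta>]
        smooth_fun_differentiable[OF smoothf])
qed

end
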